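(* Let $\{\Pi_i\}_{i=1}^n$ be a qubit POVM written as $\Pi_i=\alpha_i(\mathbb{I}+\eta_i\hat n_i\cdot\vec\sigma)$ with $\alpha_i\ge0$, $\eta_i\in[0,1]$, $\hat n_i$ unit vectors, $\sum_i\alpha_i=1$, $\sum_i\alpha_i\eta_i\hat n_i=\vec0$. Then $$R(\{\Pi_i\})=\inf_{\substack{\vec c\in\mathbb{R}^3,\ |\vec c|=1\\ c_0\in[-1,1]}}\ \sum_{i=1}^n\bigl|\alpha_i(c_0+\eta_i\,\vec c\cdot\hat n_i)\bigr|.$$
   Context: A POVM $\{\Pi_i\}$ simulates a family $\{M_{a|x}\}$ if $M_{a|x}=\sum_i p(a|x,i)\Pi_i$ with $p(a|x,i)\ge0$, $\sum_a p(a|x,i)=1$. $\mathcal{P}_r$ is the family of two-outcome POVMs $\{\tfrac12(\mathbb{I}\pm r\hat n\cdot\vec\sigma)\}$ over all unit $\hat n\in\mathbb{R}^3$. $R(\{\Pi_i\})$ is the largest $r$ such that $\{\Pi_i\}$ simulates $\mathcal{P}_r$. *)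

theory Defs
  imports "HOL-Analysis.Analysis"
begin

definition pauli :: "3 \<Rightarrow> complex^2^2" where
  "pauli k = (\<chi> i j.
     if k = 1 then (if i = j then 0 else 1)
     else if k = 2 then (if i = j then 0 else if i = 1 then - \<i> else \<i>)
     else (if i \<noteq> j then 0 else if i = 1 then 1 else -1))"

definition sigma_dot :: "real^3 \<Rightarrow> complex^2^2" where
  "sigma_dot v = (\<Sum>k\<in>UNIV. (v $ k) *\<^sub>R pauli k)"

definition bloch_effect :: "real \<Rightarrow> real \<Rightarrow> real^3 \<Rightarrow> complex^2^2" where
  "bloch_effect \<alpha> \<eta> v = \<alpha> *\<^sub>R (mat 1 + \<eta> *\<^sub>R sigma_dot v)"

definition simulates ::
  "nat \<Rightarrow> (nat \<Rightarrow> complex^2^2) \<Rightarrow> 'x set \<Rightarrow> 'a set \<Rightarrow> ('x \<Rightarrow> 'a \<Rightarrow> complex^2^2) \<Rightarrow> bool" where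
  "simulates n Pv X A M \<longleftrightarrow>
     (\<exists>p :: 'x \<Rightarrow> 'a \<Rightarrow> nat \<Rightarrow> real.
        (\<forall>x\<in>X. \<forall>i\<in>{1..n}. (\<forall>a\<in>A. p x a i \<ge> 0) \<and> (\<Sum>a\<in>A. p x a i) = 1) \<and>
        (\<forall>x\<in>X. \<forall>a\<in>A. M x a = (\<Sum>i=1..n. p x a i *\<^sub>R Pv i)))"

text \<open>The family P_r: x ranges over unit vectors, outcomes a in {+,-} (True = +).\<close>
definition P_family :: "real \<Rightarrow> real^3 \<Rightarrow> bool \<Rightarrow> complex^2^2" where
  "P_family r v a = (1/2) *\<^sub>R (mat 1 + (if a then r else - r) *\<^sub>R sigma_dot v)"

definition unit_sphere3 :: "(real^3) set" where
  "unit_sphere3 = {v. norm v = 1}"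

definition R_param :: "nat \<Rightarrow> (nat \<Rightarrow> complex^2^2) \<Rightarrow> real" where
  "R_param n Pv = Sup {r. simulates n Pv unit_sphere3 UNIV (P_family r)}"

end

theory Submission
  imports Defs
begin

text \<open>Write an effect as \<open>a I + u \<cdot> \<sigma>\<close> and record it as the point \<open>(a, u)\<close> of \<open>\<real> \<times> \<real>\<^sup>3\<close>;
  the effects of the POVM become points \<open>w\<^sub>i = (\<alpha>\<^sub>i, \<alpha>\<^sub>i \<eta>\<^sub>i n\<^sub>i)\<close> with \<open>\<Sum> w\<^sub>i = (1, 0)\<close>.
  Simulating the two outcomes of direction \<open>v\<close> with response probabilities \<open>p\<^sub>i\<close> amounts to
  \<open>\<Sum> p\<^sub>i w\<^sub>i = (1/2, r v / 2)\<close>, i.e. (with \<open>q\<^sub>i = 2 p\<^sub>i - 1 \<in> [-1, 1]\<close>) to \<open>(0, r v)\<close> lying in the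
  zonotope \<open>Z = {\<Sum> q\<^sub>i w\<^sub>i | \<bar>q\<^sub>i\<bar> \<le> 1}\<close>. By the separating hyperplane theorem \<open>Z\<close> is cut out by
  its support function \<open>h c = \<Sum> \<bar>c \<bullet> w\<^sub>i\<bar>\<close>, so \<open>r\<close> is admissible iff \<open>r (d \<bullet> v) \<le> h (d\<^sub>0, d)\<close> for
  all \<open>(d\<^sub>0, d)\<close> and unit \<open>v\<close>. As \<open>h\<close> is positively homogeneous, this reduces to \<open>r \<le> h (d\<^sub>0, d)\<close> for
  unit \<open>d\<close>, and since \<open>h (d\<^sub>0, d) \<ge> \<bar>d\<^sub>0\<bar>\<close> while \<open>h (0, d) \<le> 1\<close>, also to \<open>\<bar>d\<^sub>0\<bar> \<le> 1\<close>.\<close>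

definition bloch_matrix :: "real \<times> (real^3) \<Rightarrow> complex^2^2" where
  "bloch_matrix x = fst x *\<^sub>R mat 1 + sigma_dot (snd x)"

lemma linear_sigma_dot: "linear sigma_dot"
  unfolding sigma_dot_def
  by (intro linearI) (auto simp: scaleR_add_left sum.distrib scaleR_sum_right)

lemma linear_bloch_matrix: "linear bloch_matrix"
  unfolding bloch_matrix_def
  by (intro linearI)
    (auto simp: algebra_simps linear_add[OF linear_sigma_dot] linear_scale[OF linear_sigma_dot])

lemma bloch_matrix_entries:
  "bloch_matrix (a, u) $ 1 $ 1 = complex_of_real (a + u$3)"
  "bloch_matrix (a, u) $ 2 $ 2 = complex_of_real (a - u$3)"
  "bloch_matrix (a, u) $ 1 $ 2 = Complex (u$1) (- u$2)"
  unfolding bloch_matrix_def sigma_dot_def pauli_def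
  by (simp_all add: sum_3 mat_def complex_eq_iff)

lemma inj_bloch_matrix: "inj bloch_matrix"
proof (rule injI)
  fix x y assume eq: "bloch_matrix x = bloch_matrix y"
  obtain a u b v where xy: "x = (a, u)" "y = (b, v)" by fastforce
  have "a + u$3 = b + v$3" "a - u$3 = b - v$3" "Complex (u$1) (- u$2) = Complex (v$1) (- v$2)"
    using arg_cong[OF eq, of "\<lambda>M. M$1$1"] arg_cong[OF eq, of "\<lambda>M. M$2$2"]
      arg_cong[OF eq, of "\<lambda>M. M$1$2"]
    by (simp_all only: xy bloch_matrix_entries of_real_eq_iff)
  then show "x = y" by (auto simp: xy vec_eq_iff forall_3)
qed

lemma bloch_effect_eq_bloch_matrix: "bloch_effect \<alpha> \<eta> v = bloch_matrix (\<alpha>, (\<alpha> * \<eta>) *\<^sub>R v)"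
  unfolding bloch_effect_def bloch_matrix_def
  by (simp add: scaleR_add_right linear_scale[OF linear_sigma_dot])

lemma P_family_eq_bloch_matrix:
  "P_family r v a = bloch_matrix (1/2, ((if a then r else - r) / 2) *\<^sub>R v)"
  unfolding P_family_def bloch_matrix_def
  by (simp add: scaleR_add_right linear_scale[OF linear_sigma_dot])

lemma sum_scaleR_bloch_matrix:
  "(\<Sum>i\<in>I. p i *\<^sub>R bloch_matrix (w i)) = bloch_matrix (\<Sum>i\<in>I. p i *\<^sub>R w i)"
  by (simp add: linear_sum[OF linear_bloch_matrix] linear_scale[OF linear_bloch_matrix])

definition zonotope :: "'b set \<Rightarrow> ('b \<Rightarrow> 'a::real_vector) \<Rightarrow> 'a set" where
  "zonotope I w = {\<Sum>i\<in>I. q i *\<^sub>R w i | q. \<forall>i\<in>I. \<bar>q i\<bar> \<le> 1}"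

lemma zonotope_empty [simp]: "zonotope {} w = {0}"
  unfolding zonotope_def by auto

lemma zonotope_insert:
  assumes "finite I" "j \<notin> I"
  shows "zonotope (insert j I) w = (\<lambda>(t, y). t *\<^sub>R w j + y) ` ({-1..1} \<times> zonotope I w)"
proof (intro equalityI subsetI)
  fix x assume "x \<in> zonotope (insert j I) w"
  then obtain q where q: "\<forall>i\<in>insert j I. \<bar>q i\<bar> \<le> 1" and x: "x = (\<Sum>i\<in>insert j I. q i *\<^sub>R w i)"
    unfolding zonotope_def by blast
  have "x = q j *\<^sub>R w j + (\<Sum>i\<in>I. q i *\<^sub>R w i)" using x assms by simp
  moreover have "(\<Sum>i\<in>I. q i *\<^sub>R w i) \<in> zonotope I w" using q unfolding zonotope_def by auto
  ultimately show "x \<in> (\<lambda>(t, y). t *\<^sub>R w j + y) ` ({-1..1} \<times> zonotope I w)"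
    using q by (force simp: abs_le_iff)
next
  fix x assume "x \<in> (\<lambda>(t, y). t *\<^sub>R w j + y) ` ({-1..1} \<times> zonotope I w)"
  then obtain t q where t: "\<bar>t\<bar> \<le> 1" and q: "\<forall>i\<in>I. \<bar>q i\<bar> \<le> 1"
    and x: "x = t *\<^sub>R w j + (\<Sum>i\<in>I. q i *\<^sub>R w i)"
    unfolding zonotope_def by (auto simp: abs_le_iff)
  have "(\<Sum>i\<in>I. (q(j := t)) i *\<^sub>R w i) = (\<Sum>i\<in>I. q i *\<^sub>R w i)"
    using assms(2) by (intro sum.cong) auto
  then have "x = (\<Sum>i\<in>insert j I. (q(j := t)) i *\<^sub>R w i)" using x assms by simp
  then show "x \<in> zonotope (insert j I) w"
    unfolding zonotope_def using q t by (intro CollectI exI[of _ "q(j := t)"]) auto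
qed

lemma
  fixes w :: "'b \<Rightarrow> 'a::real_normed_vector"
  assumes "finite I"
  shows compact_zonotope: "compact (zonotope I w)"
    and convex_zonotope: "convex (zonotope I w)"
  using assms
proof (induction I rule: finite_induct)
  case (insert j I)
  have lin: "linear (\<lambda>(t::real, y). t *\<^sub>R w j + y)"
    by (intro linearI) (auto simp: algebra_simps)
  have "compact ({-1..1::real} \<times> zonotope I w)" "convex ({-1..1::real} \<times> zonotope I w)"
    using insert by (auto intro: compact_Times convex_Times)
  moreover have "continuous_on ({-1..1::real} \<times> zonotope I w) (\<lambda>(t, y). t *\<^sub>R w j + y)"
    unfolding case_prod_unfold by (intro continuous_intros)
  ultimately show "compact (zonotope (insert j I) w)" "convex (zonotope (insert j I) w)"
    using insert
    by (simp_all add: zonotope_insert compact_continuous_image convex_linear_image[OF lin])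
qed simp_all

lemma inner_le_sum_abs_if_zonotope:
  assumes "z \<in> zonotope I w"
  shows "a \<bullet> z \<le> (\<Sum>i\<in>I. \<bar>a \<bullet> w i\<bar>)"
proof -
  obtain q where q: "\<forall>i\<in>I. \<bar>q i\<bar> \<le> 1" and z: "z = (\<Sum>i\<in>I. q i *\<^sub>R w i)"
    using assms unfolding zonotope_def by blast
  have "a \<bullet> z = (\<Sum>i\<in>I. q i * (a \<bullet> w i))" by (simp add: z inner_sum_right)
  also have "\<dots> \<le> (\<Sum>i\<in>I. \<bar>a \<bullet> w i\<bar>)"
  proof (rule sum_mono)
    fix i assume "i \<in> I"
    then have "\<bar>q i * (a \<bullet> w i)\<bar> \<le> \<bar>a \<bullet> w i\<bar>"
      using q by (simp add: abs_mult mult_left_le_one_le)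
    then show "q i * (a \<bullet> w i) \<le> \<bar>a \<bullet> w i\<bar>" by linarith
  qed
  finally show ?thesis .
qed

text \<open>The zonotope is compact and convex, so a point outside it is strictly separated by some
  functional \<open>a\<close>; but the vertex with coefficients \<open>- sgn (a \<bullet> w i)\<close> minimizes \<open>a\<close> on it.\<close>
lemma mem_zonotope_iff:
  fixes w :: "'b \<Rightarrow> 'a::euclidean_space"
  assumes "finite I"
  shows "z \<in> zonotope I w \<longleftrightarrow> (\<forall>a. a \<bullet> z \<le> (\<Sum>i\<in>I. \<bar>a \<bullet> w i\<bar>))"
proof (intro iffI allI inner_le_sum_abs_if_zonotope)
  assume bound: "\<forall>a. a \<bullet> z \<le> (\<Sum>i\<in>I. \<bar>a \<bullet> w i\<bar>)"
  show "z \<in> zonotope I w"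
  proof (rule ccontr)
    assume "z \<notin> zonotope I w"
    then obtain a b where ab: "a \<bullet> z < b" "\<forall>x\<in>zonotope I w. b < a \<bullet> x"
      using assms separating_hyperplane_closed_point[OF convex_zonotope
          compact_imp_closed[OF compact_zonotope]]
      by blast
    have "(\<Sum>i\<in>I. (- sgn (a \<bullet> w i)) *\<^sub>R w i) \<in> zonotope I w"
      unfolding zonotope_def
      by (intro CollectI exI[of _ "\<lambda>i. - sgn (a \<bullet> w i)"]) (auto simp: abs_sgn_eq)
    moreover have "a \<bullet> (\<Sum>i\<in>I. (- sgn (a \<bullet> w i)) *\<^sub>R w i) = - (\<Sum>i\<in>I. \<bar>(- a) \<bullet> w i\<bar>)"
      by (simp add: inner_sum_right sum_negf abs_sgn mult.commute)
    ultimately have "- (a \<bullet> z) > (\<Sum>i\<in>I. \<bar>(- a) \<bullet> w i\<bar>)" using ab by fastforce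
    then show False using bound by (metis inner_minus_left not_le)
  qed
qed

lemma ex_unit_interval_coeffs_iff_zonotope:
  "(\<exists>P. (\<forall>i\<in>I. 0 \<le> P i \<and> P i \<le> 1) \<and> (\<Sum>i\<in>I. P i *\<^sub>R w i) = x)
     \<longleftrightarrow> 2 *\<^sub>R x - (\<Sum>i\<in>I. w i) \<in> zonotope I w"
proof
  assume "\<exists>P. (\<forall>i\<in>I. 0 \<le> P i \<and> P i \<le> 1) \<and> (\<Sum>i\<in>I. P i *\<^sub>R w i) = x"
  then obtain P where P: "\<forall>i\<in>I. 0 \<le> P i \<and> P i \<le> 1" and x: "(\<Sum>i\<in>I. P i *\<^sub>R w i) = x"
    by blast
  have "2 *\<^sub>R x - (\<Sum>i\<in>I. w i) = (\<Sum>i\<in>I. (2 * P i - 1) *\<^sub>R w i)"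
    by (simp add: x[symmetric] scaleR_sum_right sum_subtractf algebra_simps)
  then show "2 *\<^sub>R x - (\<Sum>i\<in>I. w i) \<in> zonotope I w"
    unfolding zonotope_def using P by (intro CollectI exI[of _ "\<lambda>i. 2 * P i - 1"]) auto
next
  assume "2 *\<^sub>R x - (\<Sum>i\<in>I. w i) \<in> zonotope I w"
  then obtain q where q: "\<forall>i\<in>I. \<bar>q i\<bar> \<le> 1" and x: "2 *\<^sub>R x - (\<Sum>i\<in>I. w i) = (\<Sum>i\<in>I. q i *\<^sub>R w i)"
    unfolding zonotope_def by blast
  have "(\<Sum>i\<in>I. ((1 + q i) / 2) *\<^sub>R w i) = (1/2) *\<^sub>R ((\<Sum>i\<in>I. w i) + (\<Sum>i\<in>I. q i *\<^sub>R w i))"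
    by (simp add: scaleR_sum_right sum.distrib algebra_simps add_divide_distrib)
  also have "\<dots> = x" by (simp add: x[symmetric])
  finally show "\<exists>P. (\<forall>i\<in>I. 0 \<le> P i \<and> P i \<le> 1) \<and> (\<Sum>i\<in>I. P i *\<^sub>R w i) = x"
    using q by (intro exI[of _ "\<lambda>i. (1 + q i) / 2"]) (auto simp: abs_le_iff)
qed

lemma simulates_two_outcome_iff:
  "simulates n Pv X UNIV M \<longleftrightarrow>
     (\<forall>x\<in>X. \<exists>P. (\<forall>i\<in>{1..n}. 0 \<le> P i \<and> P i \<le> 1) \<and>
        M x True = (\<Sum>i=1..n. P i *\<^sub>R Pv i) \<and> M x False = (\<Sum>i=1..n. (1 - P i) *\<^sub>R Pv i))"
proof
  assume "simulates n Pv X UNIV M"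
  then obtain p where p: "\<forall>x\<in>X. \<forall>i\<in>{1..n}. (\<forall>a\<in>UNIV. 0 \<le> p x a i) \<and> (\<Sum>a\<in>UNIV. p x a i) = 1"
    and M: "\<forall>x\<in>X. \<forall>a\<in>UNIV. M x a = (\<Sum>i=1..n. p x a i *\<^sub>R Pv i)"
    unfolding simulates_def by blast
  show "\<forall>x\<in>X. \<exists>P. (\<forall>i\<in>{1..n}. 0 \<le> P i \<and> P i \<le> 1) \<and>
      M x True = (\<Sum>i=1..n. P i *\<^sub>R Pv i) \<and> M x False = (\<Sum>i=1..n. (1 - P i) *\<^sub>R Pv i)"
  proof
    fix x assume x: "x \<in> X"
    have px: "0 \<le> p x True i \<and> p x True i \<le> 1 \<and> p x False i = 1 - p x True i"
      if "i \<in> {1..n}" for i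
      using bspec[OF bspec[OF p x] that] by (simp add: UNIV_bool)
    then have "M x False = (\<Sum>i=1..n. (1 - p x True i) *\<^sub>R Pv i)"
      using M x by (auto intro: sum.cong)
    with px show "\<exists>P. (\<forall>i\<in>{1..n}. 0 \<le> P i \<and> P i \<le> 1) \<and>
        M x True = (\<Sum>i=1..n. P i *\<^sub>R Pv i) \<and> M x False = (\<Sum>i=1..n. (1 - P i) *\<^sub>R Pv i)"
      using M x by blast
  qed
next
  assume "\<forall>x\<in>X. \<exists>P. (\<forall>i\<in>{1..n}. 0 \<le> P i \<and> P i \<le> 1) \<and>
      M x True = (\<Sum>i=1..n. P i *\<^sub>R Pv i) \<and> M x False = (\<Sum>i=1..n. (1 - P i) *\<^sub>R Pv i)"
  then obtain P where P: "\<forall>x\<in>X. (\<forall>i\<in>{1..n}. 0 \<le> P x i \<and> P x i \<le> 1) \<and>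
      M x True = (\<Sum>i=1..n. P x i *\<^sub>R Pv i) \<and> M x False = (\<Sum>i=1..n. (1 - P x i) *\<^sub>R Pv i)"
    by (rule bchoice[elim_format]) blast
  then show "simulates n Pv X UNIV M"
    unfolding simulates_def
    by (intro exI[of _ "\<lambda>x a i. if a then P x i else 1 - P x i"]) (auto simp: UNIV_bool)
qed

lemma simulates_P_family_iff_zonotope:
  assumes "(\<Sum>i=1..n. w i) = (1, 0)"
  shows "simulates n (\<lambda>i. bloch_matrix (w i)) X UNIV (P_family r)
           \<longleftrightarrow> (\<forall>v\<in>X. (0, r *\<^sub>R v) \<in> zonotope {1..n} w)"
proof -
  have "(\<Sum>i=1..n. (1 - P i) *\<^sub>R w i) = (1, 0) - (\<Sum>i=1..n. P i *\<^sub>R w i)" for P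
    using assms by (simp add: scaleR_diff_left sum_subtractf)
  then have decomposition_iff: "(P_family r v True = (\<Sum>i=1..n. P i *\<^sub>R bloch_matrix (w i)) \<and>
              P_family r v False = (\<Sum>i=1..n. (1 - P i) *\<^sub>R bloch_matrix (w i)))
         \<longleftrightarrow> (\<Sum>i=1..n. P i *\<^sub>R w i) = (1/2, (r/2) *\<^sub>R v)" for P v
    unfolding P_family_eq_bloch_matrix sum_scaleR_bloch_matrix inj_eq[OF inj_bloch_matrix]
    by (auto simp: prod_eq_iff)
  have affine_shift: "2 *\<^sub>R (1/2, (r/2) *\<^sub>R v) - (\<Sum>i=1..n. w i) = (0, r *\<^sub>R v)" for v
    unfolding assms by simp
  show ?thesis
    by (simp only: simulates_two_outcome_iff decomposition_iff ex_unit_interval_coeffs_iff_zonotope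
        affine_shift)
qed

context
  fixes h :: "real \<times> 'a::euclidean_space \<Rightarrow> real"
  assumes nonneg: "\<And>x. 0 \<le> h x"
    and homogeneous: "\<And>t x. 0 < t \<Longrightarrow> h (t *\<^sub>R x) = t * h x"
    and abs_fst_le: "\<And>x. \<bar>fst x\<bar> \<le> h x"
    and unit_le_1: "\<And>c. norm c = 1 \<Longrightarrow> h (0, c) \<le> 1"
begin

lemma INF_cylinder_mult_norm_le:
  defines "S \<equiv> {(c0, c). norm c = 1 \<and> c0 \<in> {-1..1}}"
  shows "(INF x\<in>S. h x) * norm (snd x) \<le> h x"
proof -
  define m where "m = (INF x\<in>S. h x)"
  have bdd: "bdd_below (h ` S)" using nonneg by (intro bdd_belowI2)
  obtain e :: 'a where e: "norm e = 1" using vector_choose_size[of 1] by auto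
  have "m \<le> h (0, e)" unfolding m_def using bdd e by (intro cINF_lower) (auto simp: S_def)
  with unit_le_1[OF e] have m_le_1: "m \<le> 1" by simp
  have m_le: "m \<le> h (c0, c)" if c: "norm c = 1" for c0 c
  proof (cases "\<bar>c0\<bar> \<le> 1")
    case True
    then show ?thesis unfolding m_def using bdd c by (intro cINF_lower) (auto simp: S_def)
  next
    case False
    then show ?thesis using m_le_1 abs_fst_le[of "(c0, c)"] by simp
  qed
  obtain d0 d where x: "x = (d0, d)" by fastforce
  show ?thesis
  proof (cases "d = 0")
    case True
    then show ?thesis using nonneg by (simp add: x m_def)
  next
    case False
    then have t: "norm d > 0" by simp
    have "h x = h (norm d *\<^sub>R (d0 / norm d, d /\<^sub>R norm d))" using t by (simp add: x)
    also have "\<dots> = norm d * h (d0 / norm d, d /\<^sub>R norm d)" using t by (rule homogeneous)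
    finally have "h x = norm d * h (d0 / norm d, d /\<^sub>R norm d)" .
    moreover have "m \<le> h (d0 / norm d, d /\<^sub>R norm d)" using t by (intro m_le) simp
    ultimately show ?thesis using t by (simp add: x m_def mult.commute)
  qed
qed

lemma Sup_radius_eq_INF_cylinder:
  defines "S \<equiv> {(c0, c). norm c = 1 \<and> c0 \<in> {-1..1}}"
  shows "Sup {r. \<forall>v. norm v = 1 \<longrightarrow> (\<forall>x. r * (snd x \<bullet> v) \<le> h x)} = (INF x\<in>S. h x)"
proof (rule cSup_eq_maximum)
  obtain e :: 'a where "norm e = 1" using vector_choose_size[of 1] by auto
  then have "(0, e) \<in> S" by (simp add: S_def)
  then have S_ne: "S \<noteq> {}" by blast
  then have m_nonneg: "0 \<le> (INF x\<in>S. h x)" using nonneg by (intro cINF_greatest)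
  have "(INF x\<in>S. h x) * (snd x \<bullet> v) \<le> h x" if v: "norm v = 1" for v x
  proof -
    have "(INF x\<in>S. h x) * (snd x \<bullet> v) \<le> (INF x\<in>S. h x) * norm (snd x)"
      using m_nonneg norm_cauchy_schwarz[of "snd x" v] v by (intro mult_left_mono) auto
    also have "\<dots> \<le> h x"
      using INF_cylinder_mult_norm_le by (simp add: S_def)
    finally show ?thesis .
  qed
  then show "(INF x\<in>S. h x) \<in> {r. \<forall>v. norm v = 1 \<longrightarrow> (\<forall>x. r * (snd x \<bullet> v) \<le> h x)}"
    by blast
  fix r assume r: "r \<in> {r. \<forall>v. norm v = 1 \<longrightarrow> (\<forall>x. r * (snd x \<bullet> v) \<le> h x)}"
  show "r \<le> (INF x\<in>S. h x)"
  proof (rule cINF_greatest[OF S_ne])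
    fix x assume "x \<in> S"
    then have "norm (snd x) = 1" by (auto simp: S_def)
    then have "r * (snd x \<bullet> snd x) \<le> h x" using r by blast
    then show "r \<le> h x" using \<open>norm (snd x) = 1\<close> by (simp add: norm_eq_1)
  qed
qed

end

lemma Sup_zonotope_radius_eq_INF_cylinder:
  fixes w :: "'b \<Rightarrow> real \<times> 'a::euclidean_space"
  assumes "finite I"
    and sum_w: "(\<Sum>i\<in>I. w i) = (1, 0)"
    and unit_le_1: "\<And>c. norm c = 1 \<Longrightarrow> (\<Sum>i\<in>I. \<bar>(0, c) \<bullet> w i\<bar>) \<le> 1"
  shows "Sup {r. \<forall>v. norm v = 1 \<longrightarrow> (0, r *\<^sub>R v) \<in> zonotope I w}
           = (INF x\<in>{(c0, c). norm c = 1 \<and> c0 \<in> {-1..1}}. \<Sum>i\<in>I. \<bar>x \<bullet> w i\<bar>)"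
proof -
  have "(0, r *\<^sub>R v) \<in> zonotope I w \<longleftrightarrow> (\<forall>x. r * (snd x \<bullet> v) \<le> (\<Sum>i\<in>I. \<bar>x \<bullet> w i\<bar>))" for r v
    using assms(1) by (simp add: mem_zonotope_iff inner_Pair_0)
  moreover have "Sup {r. \<forall>v. norm v = 1 \<longrightarrow> (\<forall>x. r * (snd x \<bullet> v) \<le> (\<Sum>i\<in>I. \<bar>x \<bullet> w i\<bar>))}
      = (INF x\<in>{(c0, c). norm c = 1 \<and> c0 \<in> {-1..1}}. \<Sum>i\<in>I. \<bar>x \<bullet> w i\<bar>)"
  proof (rule Sup_radius_eq_INF_cylinder)
    show "\<bar>fst x\<bar> \<le> (\<Sum>i\<in>I. \<bar>x \<bullet> w i\<bar>)" for x
    proof -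
      have "fst x = (\<Sum>i\<in>I. x \<bullet> w i)"
        by (simp only: inner_sum_right[symmetric] sum_w) (simp add: inner_Pair_0)
      then show ?thesis by (metis sum_abs)
    qed
  qed (simp_all add: sum_nonneg abs_mult sum_distrib_left unit_le_1)
  ultimately show ?thesis by simp
qed

theorem theorem3:
  fixes n :: nat and \<alpha> \<eta> :: "nat \<Rightarrow> real" and nv :: "nat \<Rightarrow> real^3"
  assumes "\<forall>i\<in>{1..n}. \<alpha> i \<ge> 0"
    and "\<forall>i\<in>{1..n}. 0 \<le> \<eta> i \<and> \<eta> i \<le> 1"
    and "\<forall>i\<in>{1..n}. norm (nv i) = 1"
    and "(\<Sum>i=1..n. \<alpha> i) = 1"
    and "(\<Sum>i=1..n. (\<alpha> i * \<eta> i) *\<^sub>R nv i) = 0"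
  shows "R_param n (\<lambda>i. bloch_effect (\<alpha> i) (\<eta> i) (nv i)) =
    (INF cc \<in> {(c0, c). norm c = 1 \<and> c0 \<in> {-1..1}}.
       (\<Sum>i=1..n. \<bar>\<alpha> i * (fst cc + \<eta> i * (snd cc \<bullet> nv i))\<bar>))"
proof -
  define w where "w i = (\<alpha> i, (\<alpha> i * \<eta> i) *\<^sub>R nv i)" for i
  have sum_w: "(\<Sum>i=1..n. w i) = (1, 0)"
    using assms(4,5) by (simp add: w_def prod_eq_iff fst_sum snd_sum)
  have "(\<Sum>i=1..n. \<bar>(0, c) \<bullet> w i\<bar>) \<le> 1" if c: "norm c = 1" for c
  proof -
    have "\<bar>(0, c) \<bullet> w i\<bar> \<le> \<alpha> i" if i: "i \<in> {1..n}" for i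
    proof -
      have "\<bar>c \<bullet> nv i\<bar> \<le> 1" using Cauchy_Schwarz_ineq2[of c "nv i"] c assms(3) i by simp
      then have "\<eta> i * \<bar>c \<bullet> nv i\<bar> \<le> 1" using assms(2) i by (simp add: mult_le_one)
      then show ?thesis
        using assms(1,2) i mult_left_le[of "\<eta> i * \<bar>c \<bullet> nv i\<bar>" "\<alpha> i"]
        by (simp add: w_def abs_mult)
    qed
    then have "(\<Sum>i=1..n. \<bar>(0, c) \<bullet> w i\<bar>) \<le> (\<Sum>i=1..n. \<alpha> i)" by (rule sum_mono)
    then show ?thesis using assms(4) by simp
  qed
  then have "Sup {r. \<forall>v. norm v = 1 \<longrightarrow> (0, r *\<^sub>R v) \<in> zonotope {1..n} w}
      = (INF x\<in>{(c0, c). norm c = 1 \<and> c0 \<in> {-1..1}}. \<Sum>i=1..n. \<bar>x \<bullet> w i\<bar>)"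
    using sum_w by (intro Sup_zonotope_radius_eq_INF_cylinder) auto
  moreover have "(\<lambda>i. bloch_effect (\<alpha> i) (\<eta> i) (nv i)) = (\<lambda>i. bloch_matrix (w i))"
    by (simp add: w_def bloch_effect_eq_bloch_matrix)
  moreover have "\<bar>\<alpha> i * (fst x + \<eta> i * (snd x \<bullet> nv i))\<bar> = \<bar>x \<bullet> w i\<bar>" for i x
    by (cases x) (simp add: w_def algebra_simps)
  ultimately show ?thesis
    by (simp add: R_param_def simulates_P_family_iff_zonotope[OF sum_w] unit_sphere3_def)
qed

end
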